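(* Let $\mathcal V$ be a finite alphabet, $\mathcal V^*$ the set of finite strings over $\mathcal V$, $e$ an environment, $p(t)$ a probability distribution on test suites $t\in\mathcal V^*$, and $p(c)$ a probability distribution on implementations $c\in\mathcal V^*$. Let $$\mathrm{sim}_{p,e}(c_1,c_2):=\mathbb E_{t\sim p}\Big[\tfrac{1}{|t|}\sum_{k=1}^{|t|}\mathbf 1\{O_k(c_1,t\mid e)=O_k(c_2,t\mid e)\}\Big],$$ fix $s\in\mathbb N$, set $\mathrm{sim}^s_{p,e}:=(\mathrm{sim}_{p,e})^s$, and for $c\in\mathcal V^*$ define $p(\mathcal N_c^s):=\sum_{c'\in\mathcal V^*}p(c')\,\mathrm{sim}^s_{p,e}(c,c')$. If $c,c'\in\mathcal V^*$ satisfy $\mathrm{sim}^s_{p,e}(c,c')\ge 1-\varepsilon$ for some $\varepsilon\in(0,1)$, then $$|p(\mathcal N_c^s)-p(\mathcal N_{c'}^s)|\le\sqrt{2\varepsilon}.$$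
   Context: A test suite $t\in\mathcal V^*$ consists of $|t|\ge1$ test cases. For an environment $e$, an implementation $c$ and a test suite $t$, the test harness returns a deterministic output vector $O(c,t\mid e)=(O_1(c,t\mid e),\dots,O_{|t|}(c,t\mid e))\in\mathbb O^{|t|}$ for a set $\mathbb O$ of possible test outputs. The quantity $p(\mathcal N_c^s)$ is the probability measure of the fuzzy neighborhood of $c$, i.e. the expected membership $\mathbb E_{c'\sim p}[\mathrm{sim}^s_{p,e}(c,c')]$. *)

theory Defs
  imports "HOL-Probability.Probability"
begin

text \<open>Test harness: Out e c t k is the k-th test output (k < length t, 0-based)
  of implementation c on test suite t in environment e.\<close>

definition sim ::
  "'v list pmf \<Rightarrow> ('e \<Rightarrow> 'v list \<Rightarrow> 'v list \<Rightarrow> nat \<Rightarrow> 'o) \<Rightarrow> 'e \<Rightarrow> 'v list \<Rightarrow> 'v list \<Rightarrow> real"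
  where
  "sim pt Out e c1 c2 =
     measure_pmf.expectation pt
       (\<lambda>t. (1 / real (length t)) *
            (\<Sum>k<length t. if Out e c1 t k = Out e c2 t k then 1 else 0))"

definition sim_pow ::
  "nat \<Rightarrow> 'v list pmf \<Rightarrow> ('e \<Rightarrow> 'v list \<Rightarrow> 'v list \<Rightarrow> nat \<Rightarrow> 'o) \<Rightarrow> 'e \<Rightarrow> 'v list \<Rightarrow> 'v list \<Rightarrow> real"
  where "sim_pow s pt Out e c1 c2 = (sim pt Out e c1 c2) ^ s"

definition nbhd_prob ::
  "nat \<Rightarrow> 'v list pmf \<Rightarrow> 'v list pmf \<Rightarrow> ('e \<Rightarrow> 'v list \<Rightarrow> 'v list \<Rightarrow> nat \<Rightarrow> 'o) \<Rightarrow> 'e \<Rightarrow> 'v list \<Rightarrow> real"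
  where "nbhd_prob s pc pt Out e c = measure_pmf.expectation pc (\<lambda>c'. sim_pow s pt Out e c c')"

end

theory Submission
  imports Defs
begin

text \<open>The disagreement rate 1 - sim is a pseudometric: on every test suite the fraction of
  positions where two implementations disagree satisfies the triangle inequality, and taking
  expectations preserves this. Hence sim(c, x) and sim(c', x) differ by at most 1 - sim(c, c'),
  and since (w + d)^s - w^s grows with w, their s-th powers differ by at most
  1 - sim(c, c')^s \<le> \<epsilon>. Averaging over x gives the bound \<epsilon>, which is below sqrt(2\<epsilon>).\<close>

(* On the empty test suite this is 1/0 * 0 = 0; all bounds below hold regardless. *)
definition agree_frac :: "('e \<Rightarrow> 'v list \<Rightarrow> 'v list \<Rightarrow> nat \<Rightarrow> 'o) \<Rightarrow> 'e \<Rightarrow> 'v list \<Rightarrow> 'v list \<Rightarrow> 'v list \<Rightarrow> real"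
  where "agree_frac Out e c1 c2 t = (1 / real (length t)) *
           (\<Sum>k<length t. if Out e c1 t k = Out e c2 t k then 1 else 0)"

lemma sim_eq_expectation_agree_frac:
  "sim pt Out e c1 c2 = measure_pmf.expectation pt (agree_frac Out e c1 c2)"
  unfolding sim_def agree_frac_def ..

lemma agree_frac_nonneg: "0 \<le> agree_frac Out e c1 c2 t"
  unfolding agree_frac_def by (simp add: sum_nonneg)

lemma agree_frac_le_one: "agree_frac Out e c1 c2 t \<le> 1"
proof -
  have "(\<Sum>k<length t. if Out e c1 t k = Out e c2 t k then 1 else 0) \<le> real (length t)"
    using sum_bounded_above[of "{..<length t}" "\<lambda>k. if Out e c1 t k = Out e c2 t k then 1 else 0::real" 1]
    by simp
  then show ?thesis
    unfolding agree_frac_def by (cases "length t = 0") (simp_all add: field_simps)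
qed

lemma agree_frac_commute: "agree_frac Out e c1 c2 t = agree_frac Out e c2 c1 t"
  unfolding agree_frac_def by (simp add: eq_commute)

lemma agree_frac_triangle:
  "agree_frac Out e c1 c2 t + agree_frac Out e c2 c3 t - 1 \<le> agree_frac Out e c1 c3 t"
proof (cases "length t = 0")
  case True
  then show ?thesis by (simp add: agree_frac_def)
next
  case False
  let ?I = "\<lambda>a b k. if Out e a t k = Out e b t k then 1 else 0::real"
  have "(\<Sum>k<length t. ?I c1 c2 k) + (\<Sum>k<length t. ?I c2 c3 k) - real (length t)
        = (\<Sum>k<length t. ?I c1 c2 k + ?I c2 c3 k - 1)"
    by (simp add: sum.distrib sum_subtractf)
  also have "\<dots> \<le> (\<Sum>k<length t. ?I c1 c3 k)"
    by (rule sum_mono) auto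
  finally have sums: "(\<Sum>k<length t. ?I c1 c2 k) + (\<Sum>k<length t. ?I c2 c3 k) - real (length t)
      \<le> (\<Sum>k<length t. ?I c1 c3 k)" .
  have "agree_frac Out e c1 c2 t + agree_frac Out e c2 c3 t - 1
      = ((\<Sum>k<length t. ?I c1 c2 k) + (\<Sum>k<length t. ?I c2 c3 k) - real (length t)) / real (length t)"
    unfolding agree_frac_def using False by (simp add: field_simps)
  also have "\<dots> \<le> (\<Sum>k<length t. ?I c1 c3 k) / real (length t)"
    using sums by (simp add: divide_right_mono)
  also have "\<dots> = agree_frac Out e c1 c3 t"
    unfolding agree_frac_def by simp
  finally show ?thesis .
qed

lemma integrable_measure_pmf_bounded:
  fixes f :: "'a \<Rightarrow> real"
  assumes "\<And>x. \<bar>f x\<bar> \<le> B"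
  shows "integrable (measure_pmf p) f"
  by (rule measure_pmf.integrable_const_bound[where B = B]) (use assms in auto)

lemma (in prob_space) abs_expectation_diff_le:
  fixes f g :: "'a \<Rightarrow> real"
  assumes "integrable M f" "integrable M g" "\<And>x. \<bar>f x - g x\<bar> \<le> C"
  shows "\<bar>expectation f - expectation g\<bar> \<le> C"
proof -
  have "\<bar>expectation f - expectation g\<bar> = \<bar>expectation (\<lambda>x. f x - g x)\<bar>"
    using assms by simp
  also have "\<dots> \<le> expectation (\<lambda>x. \<bar>f x - g x\<bar>)"
    by (rule integral_abs_bound)
  also have "\<dots> \<le> expectation (\<lambda>_. C)"
    using assms by (intro integral_mono) auto
  finally show ?thesis
    by (simp add: prob_space)
qed

lemma integrable_agree_frac: "integrable (measure_pmf pt) (agree_frac Out e c1 c2)"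
  by (rule integrable_measure_pmf_bounded[where B = 1])
     (simp add: agree_frac_nonneg agree_frac_le_one)

lemma sim_nonneg: "0 \<le> sim pt Out e c1 c2"
  unfolding sim_eq_expectation_agree_frac by (simp add: agree_frac_nonneg)

lemma sim_le_one: "sim pt Out e c1 c2 \<le> 1"
proof -
  have "measure_pmf.expectation pt (agree_frac Out e c1 c2) \<le> measure_pmf.expectation pt (\<lambda>_. 1)"
    by (intro integral_mono integrable_agree_frac) (simp_all add: agree_frac_le_one)
  then show ?thesis
    by (simp add: sim_eq_expectation_agree_frac)
qed

lemma sim_commute: "sim pt Out e c1 c2 = sim pt Out e c2 c1"
  unfolding sim_eq_expectation_agree_frac by (metis agree_frac_commute ext)

lemma sim_triangle: "sim pt Out e c1 c2 + sim pt Out e c2 c3 - 1 \<le> sim pt Out e c1 c3"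
proof -
  have "sim pt Out e c1 c2 + sim pt Out e c2 c3 - 1 =
        measure_pmf.expectation pt (\<lambda>t. agree_frac Out e c1 c2 t + agree_frac Out e c2 c3 t - 1)"
    unfolding sim_eq_expectation_agree_frac by (simp add: integrable_agree_frac)
  also have "\<dots> \<le> measure_pmf.expectation pt (agree_frac Out e c1 c3)"
    by (intro integral_mono) (simp_all add: integrable_agree_frac agree_frac_triangle)
  finally show ?thesis
    by (simp add: sim_eq_expectation_agree_frac)
qed

lemma abs_sim_diff_le: "\<bar>sim pt Out e c x - sim pt Out e c' x\<bar> \<le> 1 - sim pt Out e c c'"
  using sim_triangle[of pt Out e c c' x] sim_triangle[of pt Out e c' c x] sim_commute[of pt Out e c c']
  by linarith

lemma power_increment_mono:
  fixes u w d :: "'a :: linordered_idom"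
  assumes "0 \<le> u" "u \<le> w" "0 \<le> d"
  shows "(u + d) ^ n - u ^ n \<le> (w + d) ^ n - w ^ n"
proof -
  have "(u + d) ^ n - u ^ n = d * (\<Sum>i<n. u ^ (n - Suc i) * (u + d) ^ i)"
    using power_diff_sumr2[of "u + d" n u] by simp
  also have "\<dots> \<le> d * (\<Sum>i<n. w ^ (n - Suc i) * (w + d) ^ i)"
  proof (intro mult_left_mono sum_mono)
    fix i
    have "u ^ (n - Suc i) \<le> w ^ (n - Suc i)" "(u + d) ^ i \<le> (w + d) ^ i"
      using assms by (simp_all add: power_mono)
    then show "u ^ (n - Suc i) * (u + d) ^ i \<le> w ^ (n - Suc i) * (w + d) ^ i"
      using assms by (simp add: mult_mono)
  qed (fact assms(3))
  also have "\<dots> = (w + d) ^ n - w ^ n"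
    using power_diff_sumr2[of "w + d" n w] by simp
  finally show ?thesis .
qed

lemma abs_power_diff_le:
  fixes u v :: real
  assumes "0 \<le> u" "u \<le> 1" "0 \<le> v" "v \<le> 1"
  shows "\<bar>u ^ n - v ^ n\<bar> \<le> 1 - (1 - \<bar>u - v\<bar>) ^ n"
proof -
  have ordered: "\<bar>x ^ n - y ^ n\<bar> \<le> 1 - (1 - \<bar>x - y\<bar>) ^ n"
    if "0 \<le> x" "x \<le> y" "y \<le> 1" for x y :: real
  proof -
    have "x ^ n \<le> y ^ n"
      using that by (simp add: power_mono)
    moreover have "(x + (y - x)) ^ n - x ^ n \<le> (1 - (y - x) + (y - x)) ^ n - (1 - (y - x)) ^ n"
      using that by (intro power_increment_mono) auto
    ultimately show ?thesis
      using that by simp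
  qed
  show ?thesis
  proof (cases "u \<le> v")
    case True
    then show ?thesis using ordered assms by blast
  next
    case False
    then show ?thesis using ordered[of v u] assms by (simp add: abs_minus_commute)
  qed
qed

lemma abs_sim_pow_diff_le:
  "\<bar>sim_pow s pt Out e c x - sim_pow s pt Out e c' x\<bar> \<le> 1 - sim_pow s pt Out e c c'"
proof -
  let ?S = "sim pt Out e"
  have "\<bar>?S c x ^ s - ?S c' x ^ s\<bar> \<le> 1 - (1 - \<bar>?S c x - ?S c' x\<bar>) ^ s"
    by (intro abs_power_diff_le sim_nonneg sim_le_one)
  also have "\<dots> \<le> 1 - ?S c c' ^ s"
    using abs_sim_diff_le[of pt Out e c x c'] by (simp add: power_mono sim_nonneg)
  finally show ?thesis
    unfolding sim_pow_def .
qed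

lemma abs_nbhd_prob_diff_le:
  "\<bar>nbhd_prob s pc pt Out e c - nbhd_prob s pc pt Out e c'\<bar> \<le> 1 - sim_pow s pt Out e c c'"
proof -
  have "integrable (measure_pmf pc) (sim_pow s pt Out e c0)" for c0
    by (rule integrable_measure_pmf_bounded[where B = 1])
       (simp add: sim_pow_def sim_nonneg sim_le_one power_le_one)
  then show ?thesis
    unfolding nbhd_prob_def by (intro measure_pmf.abs_expectation_diff_le abs_sim_pow_diff_le)
qed

theorem theorem4p10:
  fixes pt pc :: "('v::finite) list pmf"
    and Out :: "'e \<Rightarrow> 'v list \<Rightarrow> 'v list \<Rightarrow> nat \<Rightarrow> 'o"
    and e :: 'e and s :: nat and c c' :: "'v list" and \<epsilon> :: real
  assumes "\<forall>t\<in>set_pmf pt. length t \<ge> 1"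
    and "0 < \<epsilon>" and "\<epsilon> < 1"
    and "sim_pow s pt Out e c c' \<ge> 1 - \<epsilon>"
  shows "\<bar>nbhd_prob s pc pt Out e c - nbhd_prob s pc pt Out e c'\<bar> \<le> sqrt (2 * \<epsilon>)"
proof -
  have "\<bar>nbhd_prob s pc pt Out e c - nbhd_prob s pc pt Out e c'\<bar> \<le> \<epsilon>"
    using abs_nbhd_prob_diff_le[of s pc pt Out e c c'] assms(4) by linarith
  also have "\<epsilon> \<le> sqrt (2 * \<epsilon>)"
    using assms(2,3) by (intro real_le_rsqrt) (simp add: power2_eq_square)
  finally show ?thesis .
qed

end
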